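(* Let $$A = \begin{pmatrix} p & q \\ r & s \end{pmatrix} \qquad \text{and} \qquad B = \begin{pmatrix} p' & q' \\ r' & s' \end{pmatrix}$$ be elements of $Y(\mathbb{Z}[\omega]) - \{ I_2 \}$. If $rs' - r's = 0$ then $A = B$.
   Context: Let $\omega = e^{2\pi i/3}$ and let $\mathbb{Z}[\omega]$ be the ring of Eisenstein integers (a PID), with unit group $\mathbb{Z}[\omega]^{\times} = \{\pm 1, \pm\omega, \pm\omega^2\}$. Fix a set of representatives $(\mathbb{Z}[\omega] - \{0\})/\mathbb{Z}[\omega]^{\times}$ of the nonzero elements up to units, and for each nonzero $c$ a set of representatives $\mathbb{Z}[\omega]/c\mathbb{Z}[\omega]$ of the residue classes modulo $c$ (these representatives are regarded as elements of $\mathbb{Z}[\omega]$). Define $$Y(\mathbb{Z}[\omega]) = \Big\{ \begin{pmatrix} a & b \\ c & d \end{pmatrix} \in SL_2(\mathbb{Z}[\omega]) \;\Big\vert\; c \in (\mathbb{Z}[\omega] - \{0\})/\mathbb{Z}[\omega]^{\times},\ a \in \mathbb{Z}[\omega]/c\mathbb{Z}[\omega] \Big\} \cup \{ I_2 \},$$ where $I_2$ is the $2\times 2$ identity matrix. *)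

theory Defs
  imports Complex_Main
begin

definition omega :: complex where
  "omega = cis (2 * pi / 3)"

definition Eis :: "complex set" where
  "Eis = {of_int a + of_int b * omega | a b. True}"

definition Eis_units :: "complex set" where
  "Eis_units = {1, -1, omega, -omega, omega^2, -(omega^2)}"

definition assoc_reps :: "complex set \<Rightarrow> bool" where
  "assoc_reps R \<longleftrightarrow> R \<subseteq> Eis - {0} \<and>
     (\<forall>z \<in> Eis - {0}. \<exists>!c. c \<in> R \<and> (\<exists>u \<in> Eis_units. z = u * c))"

definition eis_cong :: "complex \<Rightarrow> complex \<Rightarrow> complex \<Rightarrow> bool" where
  "eis_cong a b c \<longleftrightarrow> (\<exists>k \<in> Eis. a - b = k * c)"

definition residue_reps :: "complex \<Rightarrow> complex set \<Rightarrow> bool" where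
  "residue_reps c S \<longleftrightarrow> S \<subseteq> Eis \<and> (\<forall>z \<in> Eis. \<exists>!a. a \<in> S \<and> eis_cong a z c)"

text \<open>2x2 matrices (a b; c d) are represented as tuples (a, b, c, d).\<close>
definition SL2_Eis :: "(complex \<times> complex \<times> complex \<times> complex) set" where
  "SL2_Eis = {(a, b, c, d). a \<in> Eis \<and> b \<in> Eis \<and> c \<in> Eis \<and> d \<in> Eis \<and> a * d - b * c = 1}"

definition I2 :: "complex \<times> complex \<times> complex \<times> complex" where
  "I2 = (1, 0, 0, 1)"

definition Y_Eis :: "complex set \<Rightarrow> (complex \<Rightarrow> complex set) \<Rightarrow> (complex \<times> complex \<times> complex \<times> complex) set" where
  "Y_Eis R Res = {(a, b, c, d). (a, b, c, d) \<in> SL2_Eis \<and> c \<in> R \<and> a \<in> Res c} \<union> {I2}"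

end

theory Submission
  imports Defs
begin

text \<open>If the bottom rows \<open>(r, s)\<close> and \<open>(r', s')\<close> of two matrices of \<open>SL\<^sub>2(\<int>[\<omega>])\<close> are
  proportional, then each of \<open>r, r'\<close> divides the other, so \<open>r' = u r\<close> for a unit \<open>u\<close>, and
  \<open>r' = r\<close> once both are chosen representatives up to units; then \<open>s' = s\<close>. Two matrices with
  the same bottom row \<open>(r, s)\<close> have upper-left entries congruent modulo \<open>r\<close>, so \<open>p' = p\<close> once both
  are chosen residue representatives, and finally \<open>q' = q\<close> from the determinant.\<close>

lemma omega_eq: "omega = Complex (-1/2) (sqrt 3 / 2)"
proof -
  have "cos (2*pi/3) = -1/2"
    using cos_pi_minus[of "pi/3"] by (simp add: cos_60 field_simps)
  moreover have "sin (2*pi/3) = sqrt 3 / 2"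
    using sin_pi_minus[of "pi/3"] by (simp add: sin_60 field_simps)
  ultimately show ?thesis unfolding omega_def by (simp add: cis.ctr)
qed

lemma omega_squared: "omega^2 = -1 - omega"
  by (simp add: omega_eq complex_eq_iff power2_eq_square field_simps)

lemma Eis_iff: "z \<in> Eis \<longleftrightarrow> (\<exists>a b. z = of_int a + of_int b * omega)"
  unfolding Eis_def by auto

lemma zero_in_Eis: "0 \<in> Eis"
  unfolding Eis_iff by (rule exI[of _ 0], rule exI[of _ 0]) simp

lemma Eis_diff:
  assumes "x \<in> Eis" "y \<in> Eis"
  shows "x - y \<in> Eis"
proof -
  obtain a b c d where "x = of_int a + of_int b * omega" "y = of_int c + of_int d * omega"
    using assms unfolding Eis_iff by blast
  then have "x - y = of_int (a - c) + of_int (b - d) * omega"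
    by (simp add: algebra_simps)
  then show ?thesis unfolding Eis_iff by blast
qed

lemma Eis_mult:
  assumes "x \<in> Eis" "y \<in> Eis"
  shows "x * y \<in> Eis"
proof -
  obtain a b c d where x: "x = of_int a + of_int b * omega" and y: "y = of_int c + of_int d * omega"
    using assms unfolding Eis_iff by blast
  have "x * y = of_int (a*c) + of_int (a*d + b*c) * omega + of_int (b*d) * omega^2"
    by (simp add: x y algebra_simps power2_eq_square)
  also have "\<dots> = of_int (a*c - b*d) + of_int (a*d + b*c - b*d) * omega"
    by (simp add: omega_squared algebra_simps)
  finally show ?thesis unfolding Eis_iff by blast
qed

lemma norm_Eis_squared: "cmod (of_int a + of_int b * omega)^2 = of_int (a^2 - a*b + b^2)"
proof -
  have "0 \<le> (real_of_int a - real_of_int b / 2)^2 + 3 * (real_of_int b)^2 / 4"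
    by simp
  also have "\<dots> = real_of_int a * real_of_int a + real_of_int b * real_of_int b
                  - real_of_int a * real_of_int b"
    by (simp add: power2_eq_square field_simps)
  finally show ?thesis
    by (simp add: omega_eq cmod_def power2_eq_square algebra_simps)
qed

lemma Eis_norm_one_imp_unit:
  assumes "a^2 - a*b + b^2 = (1::int)"
  shows "of_int a + of_int b * omega \<in> Eis_units"
proof -
  have "(2*a - b)^2 + 3*b^2 = 4" "(2*b - a)^2 + 3*a^2 = 4"
    using assms by (simp_all add: power2_eq_square algebra_simps)
  then have "b^2 \<le> 1" "a^2 \<le> 1"
    by (smt (verit) zero_le_power2)+
  then have "a \<in> {-1, 0, 1}" "b \<in> {-1, 0, 1}"
    by (auto simp: abs_square_le_1)
  with assms show ?thesis
    unfolding Eis_units_def by (auto simp: omega_squared)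
qed

text \<open>The norm \<open>|z|\<^sup>2\<close> is a multiplicative, nonnegative integer on \<open>\<int>[\<omega>]\<close>, so it equals \<open>1\<close> on
  invertible elements.\<close>
lemma Eis_invertible_imp_unit:
  assumes "k \<in> Eis" "k' \<in> Eis" "k * k' = 1"
  shows "k \<in> Eis_units"
proof -
  obtain a b where k: "k = of_int a + of_int b * omega"
    using assms(1) Eis_iff by blast
  obtain c d where k': "k' = of_int c + of_int d * omega"
    using assms(2) Eis_iff by blast
  have "cmod k ^ 2 * cmod k' ^ 2 = 1"
    using assms(3) by (metis norm_mult norm_one power_mult_distrib power_one)
  then have "(a^2 - a*b + b^2) * (c^2 - c*d + d^2) = 1"
    unfolding k k' norm_Eis_squared by (metis of_int_eq_1_iff of_int_mult)
  moreover have "a^2 - a*b + b^2 \<ge> 0"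
    using norm_Eis_squared[of a b] by (metis of_int_0_le_iff zero_le_power2)
  ultimately have "a^2 - a*b + b^2 = 1"
    by (auto simp: zmult_eq_1_iff)
  then show ?thesis
    unfolding k by (rule Eis_norm_one_imp_unit)
qed

lemma sl2_proportional_bottom_rows:
  fixes p q r s r' s' :: "'a::comm_ring_1"
  assumes "p * s - q * r = 1" "r * s' = r' * s"
  shows "r' = r * (p * s' - q * r')"
proof -
  have "r' = r' * (p * s - q * r)"
    using assms(1) by simp
  also have "\<dots> = p * (r * s') - q * r * r'"
    using assms(2) by (simp add: algebra_simps)
  finally show ?thesis
    by (simp add: algebra_simps)
qed

lemma sl2_same_bottom_row:
  fixes p q p' q' r s :: "'a::comm_ring_1"
  assumes "p * s - q * r = 1" "p' * s - q' * r = 1"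
  shows "p' - p = (p * q' - p' * q) * r"
proof -
  have "p' - p = p' * (p * s - q * r) - p * (p' * s - q' * r)"
    using assms by simp
  also have "\<dots> = (p * q' - p' * q) * r"
    by (simp add: algebra_simps)
  finally show ?thesis .
qed

lemma SL2_Eis_proportional_bottom_rows_associated:
  assumes "(p, q, r, s) \<in> SL2_Eis" "(p', q', r', s') \<in> SL2_Eis"
    and "r * s' = r' * s" "r \<noteq> 0"
  shows "\<exists>u \<in> Eis_units. r' = u * r"
proof -
  define k where "k = p * s' - q * r'"
  define k' where "k' = p' * s - q' * r"
  have r': "r' = r * k" and r: "r = r' * k'"
    using assms(1-3) sl2_proportional_bottom_rows[of p s q r s' r']
      sl2_proportional_bottom_rows[of p' s' q' r' s r]
    unfolding SL2_Eis_def k_def k'_def by (auto simp: mult.commute)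
  have "k \<in> Eis" "k' \<in> Eis"
    using assms(1,2) unfolding k_def k'_def SL2_Eis_def by (auto intro!: Eis_diff Eis_mult)
  moreover have "r * (k * k') = r * 1"
    using r r' by (simp add: mult.assoc)
  then have "k * k' = 1"
    using assms(4) by simp
  ultimately have "k \<in> Eis_units"
    by (rule Eis_invertible_imp_unit)
  with r' show ?thesis
    by (auto simp: mult.commute)
qed

lemma SL2_Eis_same_bottom_row_cong:
  assumes "(p, q, r, s) \<in> SL2_Eis" "(p', q', r, s) \<in> SL2_Eis"
  shows "eis_cong p' p r"
  using assms sl2_same_bottom_row[of p s q r p' q']
  unfolding eis_cong_def SL2_Eis_def by (auto intro!: Eis_diff Eis_mult)

lemma assoc_reps_associated_eq:
  assumes "assoc_reps R" "c \<in> R" "c' \<in> R" "u \<in> Eis_units" "c' = u * c"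
  shows "c' = c"
proof -
  have "c' \<in> Eis - {0}"
    using assms(1,3) unfolding assoc_reps_def by blast
  then have "\<exists>!x. x \<in> R \<and> (\<exists>v \<in> Eis_units. c' = v * x)"
    using assms(1) unfolding assoc_reps_def by blast
  moreover have "\<exists>v \<in> Eis_units. c' = v * c'"
    unfolding Eis_units_def by simp
  ultimately show ?thesis
    using assms(2-5) by blast
qed

lemma residue_reps_cong_eq:
  assumes "residue_reps c S" "a \<in> S" "a' \<in> S" "eis_cong a' a c" "a \<in> Eis"
  shows "a' = a"
proof -
  have "\<exists>!x. x \<in> S \<and> eis_cong x a c"
    using assms(1,5) unfolding residue_reps_def by blast
  moreover have "eis_cong a a c"
    unfolding eis_cong_def using zero_in_Eis by force
  ultimately show ?thesis
    using assms(2-4) by blast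
qed

lemma Y_Eis_nonidentity:
  assumes "(a, b, c, d) \<in> Y_Eis R Res - {I2}"
  shows "(a, b, c, d) \<in> SL2_Eis" "c \<in> R" "a \<in> Res c"
  using assms unfolding Y_Eis_def by auto

theorem lemma2p13:
  fixes R :: "complex set" and Res :: "complex \<Rightarrow> complex set"
    and p q r s p' q' r' s' :: complex
  assumes "assoc_reps R"
    and "\<forall>c \<in> Eis - {0}. residue_reps c (Res c)"
    and "(p, q, r, s) \<in> Y_Eis R Res - {I2}"
    and "(p', q', r', s') \<in> Y_Eis R Res - {I2}"
    and "r * s' - r' * s = 0"
  shows "(p, q, r, s) = (p', q', r', s')"
proof -
  note A = Y_Eis_nonidentity[OF assms(3)] and B = Y_Eis_nonidentity[OF assms(4)]
  have r: "r \<in> Eis - {0}"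
    using assms(1) A(2) unfolding assoc_reps_def by blast
  obtain u where "u \<in> Eis_units" "r' = u * r"
    using SL2_Eis_proportional_bottom_rows_associated[OF A(1) B(1)] assms(5) r by auto
  then have rr: "r' = r"
    using assoc_reps_associated_eq[OF assms(1) A(2) B(2)] by blast
  then have ss: "s' = s"
    using assms(5) r by simp
  have "eis_cong p' p r"
    using SL2_Eis_same_bottom_row_cong A(1) B(1) rr ss by blast
  then have pp: "p' = p"
    using residue_reps_cong_eq assms(2) r A(3) B(3) A(1) rr unfolding SL2_Eis_def by blast
  have "q' * r = q * r"
    using A(1) B(1) pp rr ss unfolding SL2_Eis_def by (auto simp: algebra_simps)
  then have "q' = q"
    using r by simp
  with pp rr ss show ?thesis
    by simp
qed

end
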